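(* Let $\bm{\mu}\in X^{\mathcal{L}(\mathcal{T})}$ with $V_{s_0}(\bm{\mu})\neq\theta$. Let $\ell\in\mathcal{L}(\mathcal{T})$ satisfy $w^{s_0}_\ell(\bm{\mu})>0$ and let $s_0,s_1,\dots,s_k=\ell$ be the nodes on the path from the root to $\ell$. Then for every $s\in\{s_0,s_1,\dots,s_k\}$, \[w^s_\ell(\bm{\mu})=\frac{d_s(\bm{\mu})}{d(\mu_\ell,\theta)}.\]
   Context: $\mathcal{T}$ is a finite rooted tree with node set $S$, root $s_0$, children $\mathcal{C}(s)$, leaves $\mathcal{L}(\mathcal{T})$, $\mathcal{D}(s)$ the leaves descending from $s$; internal labels $L(s)\in\{\text{MAX},\text{MIN}\}$. $X\subseteq\mathbb{R}$ mean-parameter set of a one-parameter exponential family; $d(x,y)$ KL divergence between members with means $x,y$; threshold $\theta\in X$. $V_s(\bm{\mu})=\mu_s$ at leaves, max/min of children's values at MAX/MIN nodes; $a_s(\bm{\mu})=$'win' iff $V_s(\bm{\mu})\ge\theta$. Recursive weights: $a^*=a_{s_0}(\bm{\mu})$; $P=$MAX, $Q=$MIN if $a^*=$'win', swapped if 'lose'. Leaf $s$: $w^s_s=1$, $d_s=d(\mu_s,\theta)$ if ($a^*=$'win', $\mu_s\ge\theta$) or ($a^*=$'lose', $\mu_s<\theta$), else $0$. $L(s)=P$: $d_s=\max_c d_c$, fixed $c^*(s)\in\arg\max_c d_c$, if $d_s>0$: $w^s_\ell=w^{c^*(s)}_\ell$ on $\mathcal{D}(c^*(s))$, $0$ elsewhere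 in $\mathcal{D}(s)$. $L(s)=Q$, all $d_c>0$: $d_s=(\sum_c1/d_c)^{-1}$, $w^s_\ell=\frac{w^c_\ell/d_c}{\sum_{c'}1/d_{c'}}$ for $\ell\in\mathcal{D}(c)$. $L(s)=Q$ otherwise: $d_s=0$. Internal $s$ with $d_s=0$: $\bm{w}^s$ fixed arbitrary probability vector on $\mathcal{D}(s)$. *)

theory Defs
  imports Complex_Main
begin

datatype lbl = MaxNode | MinNode

text \<open>Every node carries an identifier of type 'n
  (identifiers are required to be pairwise distinct, see wf_tree); leaves are
  identified with their identifiers. A subtree stands for the node at its root.\<close>
datatype 'n gtree = Leaf 'n | Node 'n lbl "'n gtree list"

fun nid :: "'n gtree \<Rightarrow> 'n" where
  "nid (Leaf n) = n"
| "nid (Node n L ts) = n"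

fun node_ids :: "'n gtree \<Rightarrow> 'n list" where
  "node_ids (Leaf n) = [n]"
| "node_ids (Node n L ts) = n # concat (map node_ids ts)"

fun leaves :: "'n gtree \<Rightarrow> 'n set" where
  "leaves (Leaf n) = {n}"
| "leaves (Node n L ts) = \<Union> (set (map leaves ts))"

fun subtrees :: "'n gtree \<Rightarrow> 'n gtree set" where
  "subtrees (Leaf n) = {Leaf n}"
| "subtrees (Node n L ts) = insert (Node n L ts) (\<Union> (set (map subtrees ts)))"

fun nonempty_children :: "'n gtree \<Rightarrow> bool" where
  "nonempty_children (Leaf n) = True"
| "nonempty_children (Node n L ts) = (ts \<noteq> [] \<and> (\<forall>b\<in>set (map nonempty_children ts). b))"

definition wf_tree :: "'n gtree \<Rightarrow> bool" where
  "wf_tree T \<longleftrightarrow> distinct (node_ids T) \<and> nonempty_children T"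

fun V :: "('n \<Rightarrow> real) \<Rightarrow> 'n gtree \<Rightarrow> real" where
  "V mu (Leaf n) = mu n"
| "V mu (Node n MaxNode ts) = Max (set (map (V mu) ts))"
| "V mu (Node n MinNode ts) = Min (set (map (V mu) ts))"

text \<open>P label: MaxNode if a* = win, MinNode if a* = lose\<close>
definition Plbl :: "bool \<Rightarrow> lbl" where
  "Plbl win = (if win then MaxNode else MinNode)"

definition dcombine :: "bool \<Rightarrow> real list \<Rightarrow> real" where
  "dcombine isP ds =
     (if isP then Max (set ds)
      else if (\<forall>x\<in>set ds. x > 0) then 1 / sum_list (map (\<lambda>x. 1 / x) ds)
      else 0)"

text \<open>d_s(mu); kl is the divergence d, th the threshold, win encodes a* = 'win'\<close>
fun dd :: "(real \<Rightarrow> real \<Rightarrow> real) \<Rightarrow> real \<Rightarrow> bool \<Rightarrow> ('n \<Rightarrow> real) \<Rightarrow> 'n gtree \<Rightarrow> real" where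
  "dd kl th win mu (Leaf n) =
     (if (win \<and> mu n \<ge> th) \<or> (\<not> win \<and> mu n < th) then kl (mu n) th else 0)"
| "dd kl th win mu (Node n L ts) = dcombine (L = Plbl win) (map (dd kl th win mu) ts)"

text \<open>w^s_l(mu); cstar n is the fixed chosen child (by identifier) of a P-node n,
  arb n is the fixed arbitrary probability vector used at internal node n when d_n = 0.
  Weights outside D(s) are 0.\<close>
fun ww :: "(real \<Rightarrow> real \<Rightarrow> real) \<Rightarrow> real \<Rightarrow> bool \<Rightarrow> ('n \<Rightarrow> real) \<Rightarrow> ('n \<Rightarrow> 'n)
           \<Rightarrow> ('n \<Rightarrow> 'n \<Rightarrow> real) \<Rightarrow> 'n gtree \<Rightarrow> 'n \<Rightarrow> real" where
  "ww kl th win mu cstar arb (Leaf n) l = (if l = n then 1 else 0)"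
| "ww kl th win mu cstar arb (Node n L ts) l =
     (if dd kl th win mu (Node n L ts) = 0 then (if l \<in> leaves (Node n L ts) then arb n l else 0)
      else if L = Plbl win then
        sum_list (map (\<lambda>c. if nid c = cstar n then ww kl th win mu cstar arb c l else 0) ts)
      else sum_list (map (\<lambda>c. ww kl th win mu cstar arb c l / dd kl th win mu c) ts)
           / sum_list (map (\<lambda>c. 1 / dd kl th win mu c) ts))"

definition valid_cstar :: "(real \<Rightarrow> real \<Rightarrow> real) \<Rightarrow> real \<Rightarrow> bool \<Rightarrow> ('n \<Rightarrow> real)
    \<Rightarrow> ('n \<Rightarrow> 'n) \<Rightarrow> 'n gtree \<Rightarrow> bool" where
  "valid_cstar kl th win mu cstar T \<longleftrightarrow>
     (\<forall>n ts. Node n (Plbl win) ts \<in> subtrees T \<longrightarrow>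
        (\<exists>c\<in>set ts. nid c = cstar n \<and>
            dd kl th win mu c = Max (set (map (dd kl th win mu) ts))))"

definition valid_arb :: "('n \<Rightarrow> 'n \<Rightarrow> real) \<Rightarrow> 'n gtree \<Rightarrow> bool" where
  "valid_arb arb T \<longleftrightarrow>
     (\<forall>n L ts. Node n L ts \<in> subtrees T \<longrightarrow>
        (\<forall>l\<in>leaves (Node n L ts). arb n l \<ge> 0) \<and>
        (\<Sum>l\<in>leaves (Node n L ts). arb n l) = 1)"

end

theory Submission
  imports Defs
begin

text \<open>Along the path from the root to l the ratio w_s / d_s is constant. At a P-node
  with positive weight the selected child must be the one on the path, and weight and
  divergence are both inherited from it. At a Q-node w_s = (w_c / d_c) / S and d_s = 1 / S,
  where S is the sum of the 1 / d_c' over all children c'. At the leaf l the ratio is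
  1 / d(mu_l, theta). The condition V(root) \<noteq> theta makes the root win or lose strictly;
  this propagates to some child of a P-node and to all children of a Q-node, which gives
  d_s > 0 at the root.\<close>

lemma sum_list_map_eq_single:
  fixes f :: "'a \<Rightarrow> 'b::comm_monoid_add"
  assumes "distinct xs" "c \<in> set xs" "\<And>x. x \<in> set xs \<Longrightarrow> x \<noteq> c \<Longrightarrow> f x = 0"
  shows "sum_list (map f xs) = f c"
proof -
  have "sum_list (map f xs) = sum f (set xs)"
    using assms(1) by (simp add: sum_list_distinct_conv_sum_set)
  also have "\<dots> = sum f {c}"
    using assms(2,3) by (intro sum.mono_neutral_right) auto
  finally show ?thesis by simp
qed

lemma node_ids_nonempty: "node_ids s \<noteq> []"
  by (cases s) auto

lemma leaves_subset_node_ids: "leaves s \<subseteq> set (node_ids s)"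
  by (induction s) auto

lemma nid_in_node_ids: "nid s \<in> set (node_ids s)"
  by (cases s) auto

lemma leaf_in_subtrees: "l \<in> leaves s \<Longrightarrow> Leaf l \<in> subtrees s"
  by (induction s) auto

lemma leaves_subtree_subset: "s' \<in> subtrees s \<Longrightarrow> leaves s' \<subseteq> leaves s"
  by (induction s) auto

lemma distinct_map_node_ids_children:
  assumes "distinct (node_ids (Node n L ts))"
  shows "distinct (map node_ids ts)"
proof -
  have "[] \<notin> set (map node_ids ts)"
    using node_ids_nonempty by (metis ex_map_conv)
  then have "removeAll [] (map node_ids ts) = map node_ids ts"
    by (rule removeAll_id)
  then show ?thesis
    using assms by (simp add: distinct_concat_iff)
qed

lemma distinct_node_ids_child:
  "distinct (node_ids (Node n L ts)) \<Longrightarrow> c \<in> set ts \<Longrightarrow> distinct (node_ids c)"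
  by (simp add: distinct_concat_iff)

lemma children_sharing_id_eq:
  assumes dist: "distinct (node_ids (Node n L ts))"
    and "c \<in> set ts" "c' \<in> set ts" "x \<in> set (node_ids c)" "x \<in> set (node_ids c')"
  shows "c = c'"
proof (rule ccontr)
  assume "c \<noteq> c'"
  then have "node_ids c \<noteq> node_ids c'"
    using distinct_map_node_ids_children[OF dist] assms(2,3) by (auto simp: distinct_map inj_on_def)
  then have "set (node_ids c) \<inter> set (node_ids c') = {}"
    using dist assms(2,3) by (auto simp: distinct_concat_iff)
  then show False
    using assms(4,5) by blast
qed

lemma ww_outside_leaves: "l \<notin> leaves s \<Longrightarrow> ww kl th win mu cstar arb s l = 0"
proof (induction s)
  case (Node n L ts)
  then have "\<forall>c\<in>set ts. ww kl th win mu cstar arb c l = 0"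
    by auto
  with Node.prems show ?case
    by (simp del: dd.simps cong: map_cong if_cong)
qed simp

lemma valid_cstar_child:
  "valid_cstar kl th win mu cstar (Node n L ts) \<Longrightarrow> c \<in> set ts \<Longrightarrow> valid_cstar kl th win mu cstar c"
  unfolding valid_cstar_def by auto

definition strict_outcome :: "bool \<Rightarrow> real \<Rightarrow> real \<Rightarrow> bool" where
  "strict_outcome win th v \<longleftrightarrow> (if win then th < v else v < th)"

lemma strict_outcome_some_child:
  assumes "ts \<noteq> []" "strict_outcome win th (V mu (Node n (Plbl win) ts))"
  shows "\<exists>c\<in>set ts. strict_outcome win th (V mu c)"
  using assms by (cases win) (auto simp: strict_outcome_def Plbl_def Max_gr_iff Min_less_iff)

lemma strict_outcome_all_children:
  assumes "L \<noteq> Plbl win" "strict_outcome win th (V mu (Node n L ts))" "c \<in> set ts"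
  shows "strict_outcome win th (V mu c)"
proof -
  have "set ts \<noteq> {}"
    using assms(3) by auto
  then show ?thesis
    using assms by (cases L; cases win) (auto simp: strict_outcome_def Plbl_def)
qed

lemma dd_pos_if_strict_outcome:
  assumes "nonempty_children s" "\<forall>x\<in>leaves s. mu x \<noteq> th \<longrightarrow> 0 < kl (mu x) th"
    "strict_outcome win th (V mu s)"
  shows "0 < dd kl th win mu s"
  using assms
proof (induction s)
  case (Leaf x)
  then show ?case
    by (cases win) (auto simp: strict_outcome_def)
next
  case (Node n L ts)
  have ts_ne: "ts \<noteq> []"
    using Node.prems(1) by simp
  have child_pos: "0 < dd kl th win mu c"
    if "c \<in> set ts" "strict_outcome win th (V mu c)" for c
    using Node.IH[OF that(1) _ _ that(2)] Node.prems(1,2) that(1) by simp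
  show ?case
  proof (cases "L = Plbl win")
    case True
    then obtain c where c: "c \<in> set ts" "strict_outcome win th (V mu c)"
      using strict_outcome_some_child[OF ts_ne] Node.prems(3) by blast
    have "dd kl th win mu c \<le> Max (dd kl th win mu ` set ts)"
      using c(1) by simp
    with child_pos[OF c] True show ?thesis
      by (simp add: dcombine_def)
  next
    case False
    then have all_pos: "\<forall>c\<in>set ts. 0 < dd kl th win mu c"
      using child_pos strict_outcome_all_children[OF False Node.prems(3)] by simp
    obtain c where c: "c \<in> set ts"
      using ts_ne by (cases ts) auto
    have "0 < 1 / dd kl th win mu c"
      using c all_pos by simp
    also have "\<dots> \<le> (\<Sum>c'\<leftarrow>ts. 1 / dd kl th win mu c')"
      using c all_pos by (intro member_le_sum_list) (auto simp: less_imp_le)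
    finally show ?thesis
      using False all_pos by (simp add: dcombine_def o_def)
  qed
qed

lemma dd_leaf_eq_kl:
  "0 < dd kl th win mu (Leaf x) \<Longrightarrow> dd kl th win mu (Leaf x) = kl (mu x) th"
  by (simp split: if_splits)

lemma sum_children_ww_eq_child:
  assumes dist: "distinct (node_ids (Node n L ts))"
    and c: "c \<in> set ts" "l \<in> leaves c"
    and f_zero: "\<And>c'. f c' 0 = (0::real)"
  shows "(\<Sum>c'\<leftarrow>ts. f c' (ww kl th win mu cstar arb c' l)) = f c (ww kl th win mu cstar arb c l)"
proof (rule sum_list_map_eq_single)
  show "distinct ts"
    using distinct_map_node_ids_children[OF dist] by (simp add: distinct_map)
  show "f c' (ww kl th win mu cstar arb c' l) = 0" if "c' \<in> set ts" "c' \<noteq> c" for c'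
  proof -
    have "l \<notin> leaves c'"
      using children_sharing_id_eq[OF dist that(1) c(1), of l] that(2) c(2)
        leaves_subset_node_ids[of c] leaves_subset_node_ids[of c'] by blast
    then show ?thesis
      by (simp add: ww_outside_leaves f_zero)
  qed
qed (use c in simp)

lemma ww_dd_P_node:
  assumes dist: "distinct (node_ids (Node n L ts))" and P: "L = Plbl win"
    and cs: "valid_cstar kl th win mu cstar (Node n L ts)"
    and c: "c \<in> set ts" "l \<in> leaves c"
    and dd_pos: "0 < dd kl th win mu (Node n L ts)"
    and ww_pos: "0 < ww kl th win mu cstar arb (Node n L ts) l"
  shows "dd kl th win mu (Node n L ts) = dd kl th win mu c"
    "ww kl th win mu cstar arb (Node n L ts) l = ww kl th win mu cstar arb c l"
proof -
  let ?N = "Node n L ts"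
  let ?W = "\<lambda>s. ww kl th win mu cstar arb s l"
  let ?D = "dd kl th win mu"
  have "?W ?N = (\<Sum>c'\<leftarrow>ts. if nid c' = cstar n then ?W c' else 0)"
    using dd_pos P by (simp del: dd.simps)
  also have "\<dots> = (if nid c = cstar n then ?W c else 0)"
    using sum_children_ww_eq_child[OF dist c, of "\<lambda>c' w. if nid c' = cstar n then w else 0"]
    by simp
  finally have ww_N: "?W ?N = (if nid c = cstar n then ?W c else 0)" .
  with ww_pos have nid_c: "nid c = cstar n"
    by (auto split: if_splits)
  with ww_N show "?W ?N = ?W c"
    by simp
  obtain c0 where c0: "c0 \<in> set ts" "nid c0 = cstar n" "?D c0 = Max (?D ` set ts)"
    using cs[unfolded valid_cstar_def, rule_format, of n ts] P by auto
  have "cstar n \<in> set (node_ids c0)" "cstar n \<in> set (node_ids c)"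
    using nid_in_node_ids[of c0] nid_in_node_ids[of c] c0(2) nid_c by simp_all
  then have "c0 = c"
    by (rule children_sharing_id_eq[OF dist c0(1) c(1)])
  with c0(3) P show "?D ?N = ?D c"
    by (simp add: dcombine_def)
qed

lemma ww_dd_Q_node:
  assumes dist: "distinct (node_ids (Node n L ts))" and Q: "L \<noteq> Plbl win"
    and c: "c \<in> set ts" "l \<in> leaves c"
    and dd_pos: "0 < dd kl th win mu (Node n L ts)"
    and ww_pos: "0 < ww kl th win mu cstar arb (Node n L ts) l"
  shows "0 < dd kl th win mu c" "0 < ww kl th win mu cstar arb c l"
    "ww kl th win mu cstar arb (Node n L ts) l / dd kl th win mu (Node n L ts)
       = ww kl th win mu cstar arb c l / dd kl th win mu c"
proof -
  let ?N = "Node n L ts"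
  let ?W = "\<lambda>s. ww kl th win mu cstar arb s l"
  let ?D = "dd kl th win mu"
  let ?S = "\<Sum>c'\<leftarrow>ts. 1 / ?D c'"
  have "0 < dcombine False (map ?D ts)"
    using dd_pos Q by simp
  then have all_pos: "\<forall>c'\<in>set ts. 0 < ?D c'" and dd_N: "?D ?N = 1 / ?S"
    using Q by (auto simp: dcombine_def o_def split: if_splits)
  with c(1) show dd_c: "0 < ?D c"
    by blast
  have S_pos: "0 < ?S"
    using dd_pos dd_N by simp
  have "?W ?N = (\<Sum>c'\<leftarrow>ts. ?W c' / ?D c') / ?S"
    using dd_pos Q by (simp del: dd.simps)
  also have "(\<Sum>c'\<leftarrow>ts. ?W c' / ?D c') = ?W c / ?D c"
    using sum_children_ww_eq_child[OF dist c, of "\<lambda>c' w. w / ?D c'"] by simp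
  finally have ww_N: "?W ?N = ?W c / ?D c / ?S" .
  have "0 < ?W c / ?D c / ?S"
    using ww_pos unfolding ww_N .
  with dd_c S_pos show "0 < ?W c"
    by (simp add: zero_less_divide_iff zero_less_mult_iff mult_less_0_iff)
  show "?W ?N / ?D ?N = ?W c / ?D c"
    unfolding ww_N dd_N using S_pos by simp
qed

lemma ww_dd_ratio_child:
  assumes dist: "distinct (node_ids (Node n L ts))"
    and cs: "valid_cstar kl th win mu cstar (Node n L ts)"
    and c: "c \<in> set ts" "l \<in> leaves c"
    and dd_pos: "0 < dd kl th win mu (Node n L ts)"
    and ww_pos: "0 < ww kl th win mu cstar arb (Node n L ts) l"
  shows "0 < dd kl th win mu c \<and> 0 < ww kl th win mu cstar arb c l \<and>
    ww kl th win mu cstar arb (Node n L ts) l / dd kl th win mu (Node n L ts)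
      = ww kl th win mu cstar arb c l / dd kl th win mu c"
proof (cases "L = Plbl win")
  case True
  note eqs = ww_dd_P_node[OF dist True cs c dd_pos ww_pos]
  show ?thesis
    using dd_pos ww_pos unfolding eqs by simp
next
  case False
  then show ?thesis
    using ww_dd_Q_node[OF dist False c dd_pos ww_pos] by simp
qed

lemma ww_dd_ratio_along_path:
  assumes "distinct (node_ids s)" "valid_cstar kl th win mu cstar s"
    "s' \<in> subtrees s" "l \<in> leaves s'"
    "0 < dd kl th win mu s" "0 < ww kl th win mu cstar arb s l"
  shows "0 < dd kl th win mu s' \<and>
    ww kl th win mu cstar arb s' l / dd kl th win mu s'
      = ww kl th win mu cstar arb s l / dd kl th win mu s"
  using assms
proof (induction s)
  case (Leaf x)
  then show ?case by simp
next
  case (Node n L ts)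
  show ?case
  proof (cases "s' = Node n L ts")
    case True
    with Node.prems(5) show ?thesis by simp
  next
    case False
    then obtain c where c: "c \<in> set ts" "s' \<in> subtrees c"
      using Node.prems(3) by auto
    have "l \<in> leaves c"
      using leaves_subtree_subset[OF c(2)] Node.prems(4) by blast
    note step = ww_dd_ratio_child[OF Node.prems(1,2) c(1) this Node.prems(5,6)]
    have "0 < dd kl th win mu s' \<and>
      ww kl th win mu cstar arb s' l / dd kl th win mu s'
        = ww kl th win mu cstar arb c l / dd kl th win mu c"
      using distinct_node_ids_child[OF Node.prems(1) c(1)]
        valid_cstar_child[OF Node.prems(2) c(1)] c(2) Node.prems(4) step
      by (intro Node.IH[OF c(1)]) simp_all
    with step show ?thesis
      by simp
  qed
qed

theorem proposition2:
  fixes T :: "'n gtree" and X :: "real set" and kl :: "real \<Rightarrow> real \<Rightarrow> real"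
    and th :: real and mu :: "'n \<Rightarrow> real"
    and cstar :: "'n \<Rightarrow> 'n" and arb :: "'n \<Rightarrow> 'n \<Rightarrow> real" and l :: 'n
  assumes wf: "wf_tree T"
    and th_X: "th \<in> X"
    and mu_X: "\<forall>x\<in>leaves T. mu x \<in> X"
    and kl_nonneg: "\<forall>x\<in>X. \<forall>y\<in>X. kl x y \<ge> 0"
    and kl_zero: "\<forall>x\<in>X. \<forall>y\<in>X. kl x y = 0 \<longleftrightarrow> x = y"
    and cs: "valid_cstar kl th (V mu T \<ge> th) mu cstar T"
    and ar: "valid_arb arb T"
    and neq: "V mu T \<noteq> th"
    and l_leaf: "l \<in> leaves T"
    and pos: "ww kl th (V mu T \<ge> th) mu cstar arb T l > 0"
  shows "\<forall>s\<in>subtrees T. l \<in> leaves s \<longrightarrow>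
           ww kl th (V mu T \<ge> th) mu cstar arb s l
             = dd kl th (V mu T \<ge> th) mu s / kl (mu l) th"
proof (intro ballI impI)
  let ?win = "V mu T \<ge> th"
  let ?W = "\<lambda>s. ww kl th ?win mu cstar arb s l"
  let ?D = "dd kl th ?win mu"
  fix s assume s: "s \<in> subtrees T" "l \<in> leaves s"
  have kl_pos: "\<forall>x\<in>leaves T. mu x \<noteq> th \<longrightarrow> 0 < kl (mu x) th"
    using mu_X th_X kl_nonneg kl_zero by (simp add: order_less_le)
  have dist: "distinct (node_ids T)" and nonempty: "nonempty_children T"
    using wf by (simp_all add: wf_tree_def)
  have "strict_outcome ?win th (V mu T)"
    using neq by (auto simp: strict_outcome_def)
  then have dd_T: "0 < ?D T"
    by (rule dd_pos_if_strict_outcome[where kl = kl, OF nonempty kl_pos])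
  note ratio = ww_dd_ratio_along_path[OF dist cs _ _ dd_T pos]
  have "l \<in> leaves (Leaf l)"
    by simp
  then have dd_leaf: "0 < ?D (Leaf l)" and leaf_ratio: "?W (Leaf l) / ?D (Leaf l) = ?W T / ?D T"
    using ratio[OF leaf_in_subtrees[OF l_leaf]] by blast+
  have kl_l: "?D (Leaf l) = kl (mu l) th"
    by (rule dd_leaf_eq_kl[OF dd_leaf])
  with dd_leaf leaf_ratio have kl_l_pos: "0 < kl (mu l) th"
    and root_ratio: "?W T / ?D T = 1 / kl (mu l) th"
    by (simp_all del: dd.simps)
  have "0 < ?D s" "?W s / ?D s = 1 / kl (mu l) th"
    using ratio[OF s] root_ratio by auto
  with kl_l_pos show "?W s = ?D s / kl (mu l) th"
    by (simp add: field_simps)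
qed

end
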